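(* Let $a,x\in \mathcal{A}$. Then the following are equivalent: (1) $x$ is the $w$-weighted core inverse of $a$. (2) $xwawx=x$, $(wawx)^*=wawx$, $x\mathcal{A}=(aw)\mathcal{A}$, $x^*\mathcal{A}=(waw)\mathcal{A}$. (3) $xwawx=x$, $(wawx)^*=wawx$, ${}^0(x)={}^0(aw)$, ${}^0(x^* )={}^0(waw)$. (4) $xwawx=x$, $(wawx)^*=wawx$, ${}^0(x)={}^0(aw)$, ${}^0(x^* )\subseteq {}^0(waw)$.
   Context: $\mathcal{A}$ is a complex Banach *-algebra with identity and $w\in\mathcal{A}$. The $w$-weighted core inverse of $a$ is the unique $x$ with $a(wx)^2=x$, $(wawx)^*=wawx$, $xw(aw)^2=aw$. ${}^0(b)=\{y\in\mathcal{A}: yb=0\}$ is the left annihilator of $b$. *)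

theory Defs
  imports "HOL-Analysis.Analysis"
begin

text \<open>HOL has no complex-vector-space class, so complex scalar multiplication
  is added as an operation compatible with the real one.\<close>

class complex_banach_star_algebra = real_normed_algebra_1 + banach +
  fixes scaleC :: "complex \<Rightarrow> 'a \<Rightarrow> 'a" (infixr \<open>*\<^sub>C\<close> 75)
    and invol :: "'a \<Rightarrow> 'a"
  assumes scaleC_add_right: "c *\<^sub>C (x + y) = c *\<^sub>C x + c *\<^sub>C y"
    and scaleC_add_left: "(b + c) *\<^sub>C x = b *\<^sub>C x + c *\<^sub>C x"
    and scaleC_scaleC: "b *\<^sub>C (c *\<^sub>C x) = (b * c) *\<^sub>C x"
    and scaleC_one: "1 *\<^sub>C x = x"
    and scaleC_of_real: "(complex_of_real r) *\<^sub>C x = r *\<^sub>R x"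
    and scaleC_mult_left: "(c *\<^sub>C x) * y = c *\<^sub>C (x * y)"
    and scaleC_mult_right: "x * (c *\<^sub>C y) = c *\<^sub>C (x * y)"
    and norm_scaleC: "norm (c *\<^sub>C x) = cmod c * norm x"
    and invol_invol: "invol (invol x) = x"
    and invol_add: "invol (x + y) = invol x + invol y"
    and invol_scaleC: "invol (c *\<^sub>C x) = cnj c *\<^sub>C invol x"
    and invol_mult: "invol (x * y) = invol y * invol x"
    and norm_invol: "norm (invol x) = norm x"

definition right_ideal :: "'a::complex_banach_star_algebra \<Rightarrow> 'a set" where
  "right_ideal b = {b * y | y. True}"

definition left_annihilator :: "'a::complex_banach_star_algebra \<Rightarrow> 'a set" where
  "left_annihilator b = {y. y * b = 0}"

definition w_core_inverse :: "'a::complex_banach_star_algebra \<Rightarrow> 'a \<Rightarrow> 'a \<Rightarrow> bool" where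
  "w_core_inverse w a x \<longleftrightarrow>
     a * (w * x) ^ 2 = x \<and>
     invol (w * a * w * x) = w * a * w * x \<and>
     x * w * (a * w) ^ 2 = a * w"

end

theory Submission
  imports Defs
begin

text \<open>The implications (1)\<Rightarrow>(2)\<Rightarrow>(3)\<Rightarrow>(4) are direct: the defining
  equations exhibit \<open>x\<close> and \<open>a w\<close> as right multiples of each other, and likewise
  \<open>x\<^sup>*\<close> and \<open>w a w\<close>, and equal principal right ideals have equal left annihilators.
  For (4)\<Rightarrow>(1), an inclusion \<open>\<^sup>0(b) \<subseteq> \<^sup>0(c)\<close> lets any equation \<open>p b = b\<close> be
  transferred to \<open>p c = c\<close>, since \<open>(1 - p) b = 0\<close>. This yields \<open>x w a w a w = a w\<close>
  and \<open>w a w x w a w = w a w\<close>. Then \<open>t = a w - a w x w a w\<close> satisfies both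
  \<open>w t = 0\<close> and \<open>t = x w a w t\<close>, so \<open>t = 0\<close>; one more transfer along
  \<open>\<^sup>0(a w) = \<^sup>0(x)\<close> gives \<open>a w x w x = x\<close>.\<close>

lemma w_core_inverse_iff:
  "w_core_inverse w a x \<longleftrightarrow>
     a * w * x * w * x = x \<and> invol (w * a * w * x) = w * a * w * x \<and>
     x * w * a * w * (a * w) = a * w"
  unfolding w_core_inverse_def by (simp add: power2_eq_square mult.assoc)

lemma right_ideal_subsetI:
  fixes b c :: "'a::complex_banach_star_algebra"
  assumes "b = c * u"
  shows "right_ideal b \<subseteq> right_ideal c"
proof
  fix z assume "z \<in> right_ideal b"
  then obtain y where "z = c * (u * y)"
    using assms unfolding right_ideal_def by (auto simp: mult.assoc)
  then show "z \<in> right_ideal c" unfolding right_ideal_def by blast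
qed

lemma right_ideal_eqI:
  fixes b c :: "'a::complex_banach_star_algebra"
  assumes "b = c * u" and "c = b * v"
  shows "right_ideal b = right_ideal c"
  using right_ideal_subsetI[OF assms(1)] right_ideal_subsetI[OF assms(2)] by (rule antisym)

lemma mem_right_ideal_self: "b \<in> right_ideal b"
  unfolding right_ideal_def by (metis (mono_tags) mem_Collect_eq mult_1_right)

lemma left_annihilator_subsetI:
  fixes b c :: "'a::complex_banach_star_algebra"
  assumes "b = c * u"
  shows "left_annihilator c \<subseteq> left_annihilator b"
  unfolding left_annihilator_def using assms by (auto simp flip: mult.assoc)

lemma left_annihilator_eq_if_right_ideal_eq:
  fixes b c :: "'a::complex_banach_star_algebra"
  assumes "right_ideal b = right_ideal c"
  shows "left_annihilator b = left_annihilator c"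
proof (rule antisym)
  obtain u where "c = b * u"
    using mem_right_ideal_self[of c] assms unfolding right_ideal_def by auto
  then show "left_annihilator b \<subseteq> left_annihilator c" by (rule left_annihilator_subsetI)
  obtain v where "b = c * v"
    using mem_right_ideal_self[of b] assms unfolding right_ideal_def by auto
  then show "left_annihilator c \<subseteq> left_annihilator b" by (rule left_annihilator_subsetI)
qed

lemma left_fixed_transfer:
  fixes b c p :: "'a::complex_banach_star_algebra"
  assumes "left_annihilator b \<subseteq> left_annihilator c" and "p * b = b"
  shows "p * c = c"
proof -
  have "(1 - p) * b = 0" using assms(2) by (simp add: left_diff_distrib)
  then have "(1 - p) * c = 0" using assms(1) unfolding left_annihilator_def by auto
  then show ?thesis by (simp add: left_diff_distrib)
qed

lemma invol_right_unit:
  fixes x p :: "'a::complex_banach_star_algebra"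
  assumes "x * p = x" and "invol p = p"
  shows "p * invol x = invol x"
  using invol_mult[of x p] assms by simp

lemma w_core_inverse_imp_right_ideals:
  fixes w a x :: "'a::complex_banach_star_algebra"
  assumes "w_core_inverse w a x"
  shows "x * w * a * w * x = x"
    and "right_ideal x = right_ideal (a * w)"
    and "right_ideal (invol x) = right_ideal (w * a * w)"
proof -
  have x: "a * w * x * w * x = x" and herm: "invol (w * a * w * x) = w * a * w * x"
    and aw: "x * w * a * w * (a * w) = a * w"
    using assms by (simp_all add: w_core_inverse_iff)
  have "x * w * a * w * x = x * w * a * w * (a * w * x * w * x)" using x by simp
  also have "\<dots> = x * w * a * w * (a * w) * x * w * x" by (simp add: mult.assoc)
  finally show xwawx: "x * w * a * w * x = x" using aw x by simp
  show "right_ideal x = right_ideal (a * w)"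
    by (rule right_ideal_eqI[of _ _ "x * w * x" "w * a * w * a * w"])
      (use x aw in \<open>simp_all add: mult.assoc\<close>)
  have "a * w * x * w * (a * w) = a * w * x * w * (x * w * a * w * (a * w))" using aw by simp
  also have "\<dots> = (a * w * x * w * x) * w * a * w * (a * w)" by (simp add: mult.assoc)
  finally have "a * w * x * w * (a * w) = a * w" using x aw by simp
  then have waw: "w * a * w * x * (w * a * w) = w * a * w" by (simp add: mult.assoc)
  have unit: "w * a * w * x * invol x = invol x"
    using invol_right_unit[of x "w * a * w * x"] xwawx herm by (simp add: mult.assoc)
  have "invol x * invol (w * a * w) = w * a * w * x"
    using herm invol_mult[of "w * a * w" x] by simp
  with unit waw show "right_ideal (invol x) = right_ideal (w * a * w)"
    by (intro right_ideal_eqI[of _ _ "x * invol x" "invol (w * a * w) * (w * a * w)"])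
      (simp_all flip: mult.assoc)
qed

lemma w_core_inverse_if_left_annihilators:
  fixes w a x :: "'a::complex_banach_star_algebra"
  assumes xwawx: "x * w * a * w * x = x" and herm: "invol (w * a * w * x) = w * a * w * x"
    and ann: "left_annihilator x = left_annihilator (a * w)"
    and ann_invol: "left_annihilator (invol x) \<subseteq> left_annihilator (w * a * w)"
  shows "w_core_inverse w a x"
proof -
  have aw: "x * w * a * w * (a * w) = a * w"
    using left_fixed_transfer[of x "a * w" "x * w * a * w"] ann xwawx by simp
  have "w * a * w * x * invol x = invol x"
    using invol_right_unit[of x "w * a * w * x"] xwawx herm by (simp add: mult.assoc)
  then have waw: "w * a * w * x * (w * a * w) = w * a * w"
    using left_fixed_transfer[OF ann_invol] by blast
  define t where "t = a * w - a * w * x * w * a * w"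
  have "w * t = 0"
    using waw by (simp add: t_def right_diff_distrib mult.assoc)
  moreover have "x * w * a * w * t = t"
    using aw by (simp add: t_def right_diff_distrib flip: mult.assoc)
  ultimately have "t = 0" by (metis mult.assoc mult_zero_right)
  then have "a * w * x * w * (a * w) = a * w" by (simp add: t_def mult.assoc)
  then have "a * w * x * w * x = x"
    using left_fixed_transfer[of "a * w" x "a * w * x * w"] ann by simp
  then show ?thesis using aw herm by (simp add: w_core_inverse_iff)
qed

theorem theorem2p1:
  fixes w a x :: "'a::complex_banach_star_algebra"
  shows "(w_core_inverse w a x
     \<longleftrightarrow> (x * w * a * w * x = x \<and> invol (w * a * w * x) = w * a * w * x \<and>
          right_ideal x = right_ideal (a * w) \<and> right_ideal (invol x) = right_ideal (w * a * w)))
   \<and> (w_core_inverse w a x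
     \<longleftrightarrow> (x * w * a * w * x = x \<and> invol (w * a * w * x) = w * a * w * x \<and>
          left_annihilator x = left_annihilator (a * w) \<and>
          left_annihilator (invol x) = left_annihilator (w * a * w)))
   \<and> (w_core_inverse w a x
     \<longleftrightarrow> (x * w * a * w * x = x \<and> invol (w * a * w * x) = w * a * w * x \<and>
          left_annihilator x = left_annihilator (a * w) \<and>
          left_annihilator (invol x) \<subseteq> left_annihilator (w * a * w)))"
proof -
  have herm: "invol (w * a * w * x) = w * a * w * x" if "w_core_inverse w a x"
    using that by (simp add: w_core_inverse_iff)
  note ideals = w_core_inverse_imp_right_ideals[of w a x]
  note annihilators = left_annihilator_eq_if_right_ideal_eq[of x "a * w"]
    left_annihilator_eq_if_right_ideal_eq[of "invol x" "w * a * w"]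
  note converse = w_core_inverse_if_left_annihilators[of x w a]
  show ?thesis
    using herm ideals annihilators converse by (metis order_refl)
qed

end
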